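(* In the setting below, the function $F=F(\theta,m,\bar a)$ on $\check T\otimes\mathbb{C}$, $$F(x)=\exp\!\Big(\tfrac{k}{n}\hat I(\bar m)(x)+\tfrac{k}{n}\phi(\bar m)\,\bar a\Big)\,\theta(x+\bar m\otimes\bar a),$$ does not depend on the choice of the extension $\bar m\in\check T$ of $m:\mathbb{T}[n]\to T$.
   Context: $\mathbb{T}$ is the circle group, $\mathbb{T}[n]$ its subgroup of order $n\ge1$. $G$ is a compact connected Lie group with maximal torus $T$, Weyl group $W$, $\check T=\mathrm{Hom}(\mathbb{T},T)$, $\hat T=\mathrm{Hom}(T,\mathbb{T})$; characters are extended $\mathbb{C}$-linearly to $\check T\otimes\mathbb{C}$ and $\mathbb{Z}[\hat T]$ is viewed as functions of $x\in\check T\otimes\mathbb{C}$ via $\chi\mapsto e^{\chi(x)}$. Let $\xi\in H^4(BG;\mathbb{Z})$ be positive definite, with quadratic form $\phi:\check T\to\mathbb{Z}$ ($\phi(m)$ = coefficient of $z^2$ in $(Bm)^*\xi$, $z\in H^2(B\mathbb{T};\mathbb{Z})$ the generator), $I(a,b)=\phi(a+b)-\phi(a)-\phi(b)$, $\hat I(a)(b)=I(a,b)$. Fix $\tau$ with $\mathrm{Im}\,\tau>0$, $q=e^{2\pi i\tau}$, $C=\mathbb{C}/(2\pi i\mathbb{Z}+2\pi i\tau\mathbb{Z})$. A theta function of level $\xi$ is $\theta\in\mathbb{Z}[\hat T]((q))$, holomorphic in $(x,\tau)$, with $\theta(x+2\pi i\tau m)=e^{-\hat I(m)(x)}q^{-\phi(m)}\theta(x)$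 for $m\in\check T$ and $\theta(wx)=\theta(x)$ for $w\in W$. Let $m:\mathbb{T}[n]\to T$ be a homomorphism, $a\in C$ with $na=0$, $\bar a\in\mathbb{C}$ a lift of $a$, and $\ell,k\in\mathbb{Z}$ the integers with $n\bar a=2\pi i\ell+2\pi i\tau k$. An extension $\bar m\in\check T$ of $m$ is a cocharacter with $\bar m|_{\mathbb{T}[n]}=m$. *)

theory Defs
  imports "HOL-Analysis.Analysis"
begin

text \<open>Coordinates: the maximal torus T is identified with the product of r = CARD('r)
copies of the circle group (unit complex numbers), so the cocharacter lattice
is int^'r, the character lattice is int^'r (pairing = dot product), and
the complexified cocharacter space is complex^'r.  A cocharacter mb acts by
t |-> (t^(mb$i))_i, and the character chi is evaluated at x as
exp(sum_i chi_i x_i).\<close>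

definition qf_I :: "(int^'r \<Rightarrow> int) \<Rightarrow> int^'r \<Rightarrow> int^'r \<Rightarrow> int" where
  "qf_I \<phi> a b = \<phi> (a + b) - \<phi> a - \<phi> b"

definition int_scale :: "int \<Rightarrow> int^'r \<Rightarrow> int^'r" where
  "int_scale c a = (\<chi> i. c * a $ i)"

definition int_quadratic_form :: "(int^'r \<Rightarrow> int) \<Rightarrow> bool" where
  "int_quadratic_form \<phi> \<longleftrightarrow>
     (\<forall>c a. \<phi> (int_scale c a) = c^2 * \<phi> a) \<and>
     (\<forall>a b c. qf_I \<phi> (a + b) c = qf_I \<phi> a c + qf_I \<phi> b c)"

definition positive_definite :: "(int^'r \<Rightarrow> int) \<Rightarrow> bool" where
  "positive_definite \<phi> \<longleftrightarrow> (\<forall>a. a \<noteq> 0 \<longrightarrow> \<phi> a > 0)"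

definition Ihat :: "(int^'r \<Rightarrow> int) \<Rightarrow> int^'r \<Rightarrow> complex^'r \<Rightarrow> complex" where
  "Ihat \<phi> a x = (\<Sum>i\<in>UNIV. of_int (qf_I \<phi> a (axis i 1)) * x $ i)"

definition char_eval :: "int^'r \<Rightarrow> complex^'r \<Rightarrow> complex" where
  "char_eval \<chi>' x = (\<Sum>i\<in>UNIV. of_int (\<chi>' $ i) * x $ i)"

definition cochar_tensor :: "int^'r \<Rightarrow> complex \<Rightarrow> complex^'r" where
  "cochar_tensor m z = (\<chi> i. of_int (m $ i) * z)"

text \<open>Action of a Weyl group element, given as an integer matrix on the
cocharacter lattice, extended C-linearly.\<close>
definition weyl_act :: "int^'r^'r \<Rightarrow> complex^'r \<Rightarrow> complex^'r" where
  "weyl_act w x = (\<chi> i. \<Sum>j\<in>UNIV. of_int (w $ i $ j) * x $ j)"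

definition upper_half_plane :: "complex set" where
  "upper_half_plane = {\<tau>. 0 < Im \<tau>}"

text \<open>It is an element of
Z[That]((q)) (integer coefficients c j chi, finitely many characters per
q-power, bounded below in j), the series converges to theta, theta is
holomorphic in (tau,x) (rendered as jointly continuous and holomorphic in each
variable separately), quasi-periodic and W-invariant.\<close>
definition theta_function ::
  "(int^'r \<Rightarrow> int) \<Rightarrow> (int^'r^'r) set \<Rightarrow> (complex \<Rightarrow> complex^'r \<Rightarrow> complex) \<Rightarrow> bool" where
  "theta_function \<phi> W \<theta> \<longleftrightarrow>
     (\<exists>c :: int \<Rightarrow> int^'r \<Rightarrow> int.
        (\<forall>j. finite {\<chi>'. c j \<chi>' \<noteq> 0}) \<and>
        (\<exists>j0. \<forall>j<j0. \<forall>\<chi>'. c j \<chi>' = 0) \<and>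
        (\<forall>\<tau>\<in>upper_half_plane. \<forall>x.
           ((\<lambda>j. (\<Sum>\<chi>'\<in>{\<chi>'. c j \<chi>' \<noteq> 0}. of_int (c j \<chi>') * exp (char_eval \<chi>' x))
                  * exp (2 * complex_of_real pi * \<i> * \<tau> * of_int j)) has_sum \<theta> \<tau> x) UNIV)) \<and>
     continuous_on (upper_half_plane \<times> UNIV) (\<lambda>p. \<theta> (fst p) (snd p)) \<and>
     (\<forall>x. (\<lambda>\<tau>. \<theta> \<tau> x) holomorphic_on upper_half_plane) \<and>
     (\<forall>\<tau>\<in>upper_half_plane. \<forall>x i.
        (\<lambda>z. \<theta> \<tau> (\<chi> j. if j = i then z else x $ j)) holomorphic_on UNIV) \<and>
     (\<forall>\<tau>\<in>upper_half_plane. \<forall>m x.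
        \<theta> \<tau> (x + cochar_tensor m (2 * complex_of_real pi * \<i> * \<tau>)) =
          exp (- Ihat \<phi> m x) * exp (- 2 * complex_of_real pi * \<i> * \<tau> * of_int (\<phi> m)) * \<theta> \<tau> x) \<and>
     (\<forall>\<tau>\<in>upper_half_plane. \<forall>w\<in>W. \<forall>x. \<theta> \<tau> (weyl_act w x) = \<theta> \<tau> x)"

definition circ_tors :: "nat \<Rightarrow> complex set" where
  "circ_tors n = {z. z ^ n = 1}"

text \<open>A homomorphism T[n] -> T (only its values on T[n] matter).\<close>
definition torus_hom :: "nat \<Rightarrow> (complex \<Rightarrow> complex^'r) \<Rightarrow> bool" where
  "torus_hom n m \<longleftrightarrow>
     (\<forall>z\<in>circ_tors n. \<forall>i. norm (m z $ i) = 1) \<and>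
     (\<forall>z\<in>circ_tors n. \<forall>w\<in>circ_tors n. m (z * w) = (\<chi> i. m z $ i * m w $ i))"

definition extends_hom :: "nat \<Rightarrow> (complex \<Rightarrow> complex^'r) \<Rightarrow> int^'r \<Rightarrow> bool" where
  "extends_hom n m mb \<longleftrightarrow> (\<forall>z\<in>circ_tors n. m z = (\<chi> i. z powi (mb $ i)))"

definition F_fun ::
  "(int^'r \<Rightarrow> int) \<Rightarrow> (complex \<Rightarrow> complex^'r \<Rightarrow> complex) \<Rightarrow> complex \<Rightarrow> nat \<Rightarrow> int \<Rightarrow> complex
     \<Rightarrow> int^'r \<Rightarrow> complex^'r \<Rightarrow> complex" where
  "F_fun \<phi> \<theta> \<tau> n k abar mb x =
     exp (of_int k / of_nat n * Ihat \<phi> mb x + of_int k / of_nat n * of_int (\<phi> mb) * abar)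
       * \<theta> \<tau> (x + cochar_tensor mb abar)"

end

theory Submission
  imports Defs
begin

text \<open>Two extensions of m agree at the primitive root of unity exp(2 \<pi> i / n), so they
differ by n d for a cocharacter d. Because n abar = 2 \<pi> i l + 2 \<pi> i \<tau> k, replacing mb by
mb + n d moves the argument of \<theta> by d \<otimes> 2 \<pi> i l, a period of every character, and by
(k d) \<otimes> 2 \<pi> i \<tau>, which multiplies \<theta> by its automorphy factor. The prefactor of F changes
by exactly the inverse factor, up to exp(-2 \<pi> i k l \<phi>(d)) = 1.\<close>

lemma qf_I_commute: "qf_I \<phi> a b = qf_I \<phi> b a"
  unfolding qf_I_def by (simp add: add.commute)

context
  fixes \<phi> :: "int^'r \<Rightarrow> int"
  assumes quadratic: "int_quadratic_form \<phi>"
begin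

lemma qf_I_add_left: "qf_I \<phi> (a + b) c = qf_I \<phi> a c + qf_I \<phi> b c"
  using quadratic unfolding int_quadratic_form_def by blast

lemma qf_I_add_right: "qf_I \<phi> c (a + b) = qf_I \<phi> c a + qf_I \<phi> c b"
  using qf_I_add_left by (simp add: qf_I_commute[of \<phi> c])

lemma qf_I_zero_right: "qf_I \<phi> a 0 = 0"
  using qf_I_add_right[of a 0 0] by simp

lemma qf_I_scale_left: "qf_I \<phi> (c *s a) b = c * qf_I \<phi> a b"
proof (induction c rule: int_induct[where k = 0])
  case base
  show ?case using qf_I_add_left[of 0 0 b] by simp
next
  case (step1 i)
  then show ?case using qf_I_add_left[of "i *s a" a b] by (simp add: vector_sadd_rdistrib algebra_simps)
next
  case (step2 i)
  then show ?case using qf_I_add_left[of "(i - 1) *s a" a b] by (simp add: vector_sadd_rdistrib algebra_simps)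
qed

lemma qf_I_scale_right: "qf_I \<phi> a (c *s b) = c * qf_I \<phi> a b"
  by (simp add: qf_I_commute[of \<phi> a] qf_I_scale_left)

lemma quadratic_scale: "\<phi> (c *s a) = c\<^sup>2 * \<phi> a"
proof -
  have "int_scale c a = c *s a" by (simp add: int_scale_def vec_eq_iff)
  then show ?thesis using quadratic unfolding int_quadratic_form_def by metis
qed

lemma qf_I_self: "qf_I \<phi> a a = 2 * \<phi> a"
proof -
  have "a + a = 2 *s a" by (simp add: vec_eq_iff)
  then show ?thesis using quadratic_scale[of 2 a] by (simp add: qf_I_def)
qed

lemma quadratic_add_scale: "\<phi> (a + c *s b) = \<phi> a + c\<^sup>2 * \<phi> b + c * qf_I \<phi> a b"
  using qf_I_def[of \<phi> a "c *s b"] by (simp add: quadratic_scale qf_I_scale_right)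

lemma qf_I_sum_right: "qf_I \<phi> a (\<Sum>s\<in>S. f s) = (\<Sum>s\<in>S. qf_I \<phi> a (f s))"
  by (induction S rule: infinite_finite_induct) (simp_all add: qf_I_zero_right qf_I_add_right)

lemma qf_I_basis_expansion: "qf_I \<phi> a b = (\<Sum>i\<in>UNIV. b $ i * qf_I \<phi> a (axis i 1))"
proof -
  have "qf_I \<phi> a b = qf_I \<phi> a (\<Sum>i\<in>UNIV. b $ i *s axis i 1)"
    by (simp add: basis_expansion)
  also have "\<dots> = (\<Sum>i\<in>UNIV. qf_I \<phi> a (b $ i *s axis i 1))"
    by (rule qf_I_sum_right)
  finally show ?thesis by (simp add: qf_I_scale_right)
qed

lemma Ihat_add_left: "Ihat \<phi> (a + b) x = Ihat \<phi> a x + Ihat \<phi> b x"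
  unfolding Ihat_def by (simp add: qf_I_add_left distrib_right sum.distrib)

lemma Ihat_scale_left: "Ihat \<phi> (c *s a) x = of_int c * Ihat \<phi> a x"
  unfolding Ihat_def by (simp add: qf_I_scale_left sum_distrib_left mult.assoc)

lemma Ihat_add_right: "Ihat \<phi> a (x + y) = Ihat \<phi> a x + Ihat \<phi> a y"
  unfolding Ihat_def by (simp add: distrib_left sum.distrib)

lemma Ihat_cochar_tensor: "Ihat \<phi> a (cochar_tensor b z) = of_int (qf_I \<phi> a b) * z"
  unfolding Ihat_def cochar_tensor_def qf_I_basis_expansion[of a b]
  by (simp add: sum_distrib_left mult_ac)

end

lemma cochar_tensor_add_left: "cochar_tensor (a + b) z = cochar_tensor a z + cochar_tensor b z"
  by (simp add: cochar_tensor_def vec_eq_iff distrib_right)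

lemma cochar_tensor_scale_left: "cochar_tensor (c *s a) z = cochar_tensor a (of_int c * z)"
  by (simp add: cochar_tensor_def vec_eq_iff mult_ac)

lemma cochar_tensor_add_right: "cochar_tensor a (z + w) = cochar_tensor a z + cochar_tensor a w"
  by (simp add: cochar_tensor_def vec_eq_iff distrib_left)

lemma char_eval_add_cochar_tensor:
  "char_eval \<chi>' (x + cochar_tensor d z) = char_eval \<chi>' x + of_int (\<Sum>i\<in>UNIV. \<chi>' $ i * d $ i) * z"
  by (simp add: char_eval_def cochar_tensor_def algebra_simps sum.distrib sum_distrib_left)

lemma theta_function_quasi_periodic:
  assumes "theta_function \<phi> W \<theta>" and "0 < Im \<tau>"
  shows "\<theta> \<tau> (x + cochar_tensor m (2 * complex_of_real pi * \<i> * \<tau>)) =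
           exp (- Ihat \<phi> m x) * exp (- 2 * complex_of_real pi * \<i> * \<tau> * of_int (\<phi> m)) * \<theta> \<tau> x"
  using assms unfolding theta_function_def upper_half_plane_def by blast

lemma theta_function_periodic:
  assumes "theta_function \<phi> W \<theta>" and "0 < Im \<tau>"
  shows "\<theta> \<tau> (x + cochar_tensor d (2 * complex_of_real pi * \<i> * of_int l)) = \<theta> \<tau> x"
proof -
  let ?P = "cochar_tensor d (2 * complex_of_real pi * \<i> * of_int l)"
  obtain c :: "int \<Rightarrow> int^'a \<Rightarrow> int" where expansion: "\<forall>\<tau>\<in>upper_half_plane. \<forall>x.
      ((\<lambda>j. (\<Sum>\<chi>'\<in>{\<chi>'. c j \<chi>' \<noteq> 0}. of_int (c j \<chi>') * exp (char_eval \<chi>' x))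
             * exp (2 * complex_of_real pi * \<i> * \<tau> * of_int j)) has_sum \<theta> \<tau> x) UNIV"
    using assms(1) unfolding theta_function_def by blast
  have "\<tau> \<in> upper_half_plane"
    using assms(2) by (simp add: upper_half_plane_def)
  note c = expansion[rule_format, OF this]
  have shift: "exp (char_eval \<chi>' (x + ?P)) = exp (char_eval \<chi>' x)" for \<chi>'
  proof -
    have "char_eval \<chi>' (x + ?P) = char_eval \<chi>' x + \<i> * (of_int (l * (\<Sum>i\<in>UNIV. \<chi>' $ i * d $ i)) * (of_real pi * 2))"
      unfolding char_eval_add_cochar_tensor by (simp only: of_int_mult mult_ac)
    then show ?thesis by (simp only: exp_plus_2pin)
  qed
  have "((\<lambda>j. (\<Sum>\<chi>'\<in>{\<chi>'. c j \<chi>' \<noteq> 0}. of_int (c j \<chi>') * exp (char_eval \<chi>' x))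
             * exp (2 * complex_of_real pi * \<i> * \<tau> * of_int j)) has_sum \<theta> \<tau> (x + ?P)) UNIV"
    using c[of "x + ?P"] by (simp only: shift)
  then show ?thesis
    using c[of x] by (rule has_sum_unique)
qed

lemma powi_eq_on_roots_of_unity_imp_dvd:
  assumes "n \<ge> 1"
    and agree: "\<And>z. z \<in> circ_tors n \<Longrightarrow> z powi a = z powi b"
  shows "int n dvd a - b"
proof -
  define w :: complex where "w = 2 * complex_of_real pi * \<i> / of_nat n"
  have "exp w ^ n = exp (of_nat n * w)"
    by (rule exp_of_nat_mult[symmetric])
  also have "\<dots> = 1"
    using assms(1) by (simp add: w_def)
  finally have "exp w powi a = exp w powi b"
    using agree by (simp add: circ_tors_def)
  then have "exp (of_int a * w) = exp (of_int b * w)"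
    by (simp add: exp_power_int)
  then obtain j :: int where "of_int a * w = of_int b * w + of_int (2 * j) * pi * \<i>"
    unfolding exp_eq by blast
  then have "(2 * pi * \<i>) * of_int (a - b) = (2 * pi * \<i>) * (of_int (int n * j) :: complex)"
    using assms(1) by (simp add: w_def field_simps)
  then have "of_int (a - b) = (of_int (int n * j) :: complex)"
    by simp
  then show ?thesis by (metis dvd_triv_left of_int_eq_iff)
qed

lemma extends_hom_diff_multiple:
  assumes "n \<ge> 1" and "extends_hom n m mb1" and "extends_hom n m mb2"
  obtains d where "mb1 = mb2 + int n *s d"
proof -
  have agree: "z powi (mb1 $ i) = z powi (mb2 $ i)" if "z \<in> circ_tors n" for z i
  proof -
    have "m z = (\<chi> i. z powi (mb1 $ i))" "m z = (\<chi> i. z powi (mb2 $ i))"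
      using assms(2,3) that unfolding extends_hom_def by blast+
    then have "(\<chi> i. z powi (mb1 $ i)) $ i = (\<chi> i. z powi (mb2 $ i)) $ i"
      by simp
    then show ?thesis by simp
  qed
  have "int n dvd mb1 $ i - mb2 $ i" for i
    using assms(1) agree by (rule powi_eq_on_roots_of_unity_imp_dvd)
  then have "\<forall>i. \<exists>k. mb1 $ i - mb2 $ i = int n * k"
    by (simp add: dvd_def)
  then obtain d where "\<And>i. mb1 $ i - mb2 $ i = int n * d i"
    by metis
  then have "mb1 = mb2 + int n *s (\<chi> i. d i)"
    by (simp add: vec_eq_iff algebra_simps)
  then show thesis by (rule that)
qed

lemma theta_function_add_torsion_multiple:
  fixes x :: "complex^'r" and mb d :: "int^'r"
  assumes theta: "theta_function \<phi> W \<theta>" and tau: "0 < Im \<tau>"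
    and abar: "of_nat n * abar = 2 * complex_of_real pi * \<i> * of_int l + 2 * complex_of_real pi * \<i> * \<tau> * of_int k"
  defines y_def: "y \<equiv> x + cochar_tensor mb abar"
    and P_def: "P \<equiv> cochar_tensor d (2 * complex_of_real pi * \<i> * of_int l)"
    and T_def: "T \<equiv> 2 * complex_of_real pi * \<i> * \<tau>"
  shows "\<theta> \<tau> (x + cochar_tensor (mb + int n *s d) abar)
           = exp (- Ihat \<phi> (k *s d) (y + P)) * exp (- T * of_int (\<phi> (k *s d))) * \<theta> \<tau> y"
proof -
  have "cochar_tensor (int n *s d) abar = cochar_tensor d (of_nat n * abar)"
    by (simp add: cochar_tensor_scale_left)
  also have "\<dots> = P + cochar_tensor (k *s d) T"
    unfolding abar P_def T_def by (simp add: cochar_tensor_add_right cochar_tensor_scale_left mult_ac)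
  finally have tensor: "cochar_tensor (mb + int n *s d) abar = cochar_tensor mb abar + P + cochar_tensor (k *s d) T"
    by (simp add: cochar_tensor_add_left add.assoc)
  show ?thesis
    using theta_function_quasi_periodic[OF theta tau, of "y + P" "k *s d"]
      theta_function_periodic[OF theta tau, of y d l]
    by (simp add: tensor y_def P_def T_def add.assoc)
qed

lemma F_fun_add_multiple:
  assumes quadratic: "int_quadratic_form \<phi>" and theta: "theta_function \<phi> W \<theta>"
    and tau: "0 < Im \<tau>" and n: "n \<ge> 1"
    and abar: "of_nat n * abar = 2 * complex_of_real pi * \<i> * of_int l + 2 * complex_of_real pi * \<i> * \<tau> * of_int k"
  shows "F_fun \<phi> \<theta> \<tau> n k abar (mb + int n *s d) = F_fun \<phi> \<theta> \<tau> n k abar mb"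
proof
  fix x
  define L where "L = 2 * complex_of_real pi * \<i> * of_int l"
  define T where "T = 2 * complex_of_real pi * \<i> * \<tau>"
  define y where "y = x + cochar_tensor mb abar"
  define P where "P = cochar_tensor d L"
  define A where "A = Ihat \<phi> mb x"
  define B where "B = Ihat \<phi> d x"
  define M where "M = (of_int (qf_I \<phi> mb d) :: complex)"
  define D where "D = (of_int (\<phi> d) :: complex)"
  define K where "K = (of_int k / of_nat n :: complex)"
  have theta_value: "\<theta> \<tau> (x + cochar_tensor (mb + int n *s d) abar)
      = exp (- Ihat \<phi> (k *s d) (y + P)) * exp (- T * of_int (\<phi> (k *s d))) * \<theta> \<tau> y"
    unfolding y_def P_def L_def T_def by (rule theta_function_add_torsion_multiple[OF theta tau abar])
  have Ihat_correction: "Ihat \<phi> (k *s d) (y + P) = of_int k * (B + M * abar + 2 * D * L)"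
    unfolding y_def P_def B_def M_def D_def
    by (simp add: Ihat_scale_left[OF quadratic] Ihat_add_right[OF quadratic] Ihat_cochar_tensor[OF quadratic]
        qf_I_scale_left[OF quadratic] qf_I_commute[of \<phi> d mb] qf_I_self[OF quadratic] algebra_simps)
  have Ihat_shift: "Ihat \<phi> (mb + int n *s d) x = A + of_nat n * B"
    unfolding A_def B_def by (simp add: Ihat_add_left[OF quadratic] Ihat_scale_left[OF quadratic])
  have \<phi>_shift: "of_int (\<phi> (mb + int n *s d)) = of_int (\<phi> mb) + (of_nat n)\<^sup>2 * D + of_nat n * M"
    unfolding D_def M_def by (simp add: quadratic_add_scale[OF quadratic])
  have \<phi>_correction: "of_int (\<phi> (k *s d)) = (of_int k)\<^sup>2 * D"
    unfolding D_def by (simp add: quadratic_scale[OF quadratic])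
  have F_value: "F_fun \<phi> \<theta> \<tau> n k abar (mb + int n *s d) x
      = exp (K * Ihat \<phi> (mb + int n *s d) x + K * of_int (\<phi> (mb + int n *s d)) * abar
          + - Ihat \<phi> (k *s d) (y + P) + - T * of_int (\<phi> (k *s d))) * \<theta> \<tau> y"
    (is "_ = exp ?E * _")
    unfolding F_fun_def theta_value K_def[symmetric] exp_add by (simp only: mult_ac)
  txt \<open>Everything but -2 \<pi> i k l \<phi>(d) cancels, since K n = k and n abar = L + T k.\<close>
  have "?E - (K * A + K * of_int (\<phi> mb) * abar - 2 * complex_of_real pi * \<i> * of_int (k * l * \<phi> d))
     = (K * of_nat n - of_int k) * (B + of_nat n * D * abar + M * abar)
       + of_int k * D * (of_nat n * abar - (L + T * of_int k))"
    unfolding Ihat_correction Ihat_shift \<phi>_shift \<phi>_correction L_def D_def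
    by (simp add: algebra_simps power2_eq_square)
  also have "\<dots> = 0"
    using n by (simp add: K_def abar L_def T_def)
  finally have "?E = K * A + K * of_int (\<phi> mb) * abar + \<i> * (of_int (- k * l * \<phi> d) * (of_real pi * 2))"
    by (simp add: algebra_simps)
  then have "F_fun \<phi> \<theta> \<tau> n k abar (mb + int n *s d) x = exp (K * A + K * of_int (\<phi> mb) * abar) * \<theta> \<tau> y"
    unfolding F_value by (simp only: exp_plus_2pin)
  then show "F_fun \<phi> \<theta> \<tau> n k abar (mb + int n *s d) x = F_fun \<phi> \<theta> \<tau> n k abar mb x"
    unfolding F_fun_def A_def y_def K_def by simp
qed

theorem lemma5p2:
  fixes \<phi> :: "int^'r \<Rightarrow> int" and W :: "(int^'r^'r) set"
    and \<theta> :: "complex \<Rightarrow> complex^'r \<Rightarrow> complex"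
    and \<tau> abar :: complex and n :: nat and l k :: int
    and m :: "complex \<Rightarrow> complex^'r" and mb1 mb2 :: "int^'r"
  assumes "int_quadratic_form \<phi>" and "positive_definite \<phi>"
    and "theta_function \<phi> W \<theta>"
    and "0 < Im \<tau>"
    and "n \<ge> 1"
    and "torus_hom n m"
    and "of_nat n * abar = 2 * complex_of_real pi * \<i> * of_int l + 2 * complex_of_real pi * \<i> * \<tau> * of_int k"
    and "extends_hom n m mb1" and "extends_hom n m mb2"
  shows "F_fun \<phi> \<theta> \<tau> n k abar mb1 = F_fun \<phi> \<theta> \<tau> n k abar mb2"
proof -
  obtain d where "mb1 = mb2 + int n *s d"
    using extends_hom_diff_multiple[OF assms(5,8,9)] .
  then show ?thesis
    using F_fun_add_multiple[OF assms(1,3,4,5,7)] by simp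
qed

end
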